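(* Let $E$ be a finite nonempty set, $f:2^E\to\mathbb{N}$ an integral polymatroid rank function, and let $C_e:\mathbb{N}\times\mathbb{N}\to\mathbb{R}_+$, $e\in E$, be regular functions. Let $D\subseteq\mathbb{N}$ be a set of integers with $\mathbb{B}_f(d)\neq\emptyset$ for all $d\in D$. Then for every $\vec t\in\mathbb{N}^E$, every $d\in D$, every optimal solution $\vec x^*(\vec t,d)$ of $P(\vec t,d)$, every $d'\in D$ and every $\vec t'\in\mathbb{N}^E$, there is an optimal solution $\vec x^*(\vec t',d')$ of $P(\vec t',d')$ with $\|\vec x^*(\vec t,d)-\vec x^*(\vec t',d')\|\le 2\|\vec t-\vec t'\|+|d-d'|$.
   Context: $\mathbb{N}=\{0,1,2,\dots\}$. A set function $f:2^E\to\mathbb{N}$ is an integral polymatroid rank function if $f(\emptyset)=0$, $f$ is monotone and submodular. For $\vec x\in\mathbb{N}^E$, $x(U)=\sum_{e\in U}x_e$; $\mathbb{B}_f(d)=\{\vec x\in\mathbb{N}^E: x(U)\le f(U)\ \forall U\subseteq E,\ x(E)=d\}$. $P(\vec t,d)$: minimize $\sum_{e\in E}C_e(x_e;t_e)$ subject to $\vec x\in\mathbb{B}_f(d)$. $\|\cdot\|$ is the $L_1$-norm. For $C:\mathbb{N}\times\mathbb{N}\to\mathbb{R}$, $C^-(x;t)=C(x;t)-C(x-1;t)$ for $x\ge1$; $C$ is regular if $C^-(x;t)\le C^-(x;t+1)$ and $C^-(x;t+1)\le C^-(x+1;t)$ for all $x\ge1$, $t\in\mathbb{N}$. *)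

theory Defs
  imports "HOL-Analysis.Analysis"
begin

definition polymatroid_rank :: "'a set \<Rightarrow> ('a set \<Rightarrow> nat) \<Rightarrow> bool" where
  "polymatroid_rank E f \<longleftrightarrow>
     f {} = 0 \<and>
     (\<forall>U V. U \<subseteq> V \<and> V \<subseteq> E \<longrightarrow> f U \<le> f V) \<and>
     (\<forall>U V. U \<subseteq> E \<and> V \<subseteq> E \<longrightarrow> f (U \<union> V) + f (U \<inter> V) \<le> f U + f V)"

definition vecs :: "'a set \<Rightarrow> ('a \<Rightarrow> nat) set" where
  "vecs E = {x. \<forall>e. e \<notin> E \<longrightarrow> x e = 0}"

definition base :: "'a set \<Rightarrow> ('a set \<Rightarrow> nat) \<Rightarrow> nat \<Rightarrow> ('a \<Rightarrow> nat) set" where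
  "base E f d = {x \<in> vecs E. (\<forall>U. U \<subseteq> E \<longrightarrow> (\<Sum>e\<in>U. x e) \<le> f U) \<and> (\<Sum>e\<in>E. x e) = d}"

definition Cminus :: "(nat \<Rightarrow> nat \<Rightarrow> real) \<Rightarrow> nat \<Rightarrow> nat \<Rightarrow> real" where
  "Cminus C x t = C x t - C (x - 1) t"

definition regular :: "(nat \<Rightarrow> nat \<Rightarrow> real) \<Rightarrow> bool" where
  "regular C \<longleftrightarrow> (\<forall>x t. x \<ge> 1 \<longrightarrow>
      Cminus C x t \<le> Cminus C x (Suc t) \<and> Cminus C x (Suc t) \<le> Cminus C (Suc x) t)"

definition cost :: "'a set \<Rightarrow> ('a \<Rightarrow> nat \<Rightarrow> nat \<Rightarrow> real) \<Rightarrow> ('a \<Rightarrow> nat) \<Rightarrow> ('a \<Rightarrow> nat) \<Rightarrow> real" where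
  "cost E C t x = (\<Sum>e\<in>E. C e (x e) (t e))"

definition optimal :: "'a set \<Rightarrow> ('a set \<Rightarrow> nat) \<Rightarrow> ('a \<Rightarrow> nat \<Rightarrow> nat \<Rightarrow> real)
     \<Rightarrow> ('a \<Rightarrow> nat) \<Rightarrow> nat \<Rightarrow> ('a \<Rightarrow> nat) \<Rightarrow> bool" where
  "optimal E f C t d x \<longleftrightarrow> x \<in> base E f d \<and> (\<forall>y \<in> base E f d. cost E C t x \<le> cost E C t y)"

definition l1dist :: "'a set \<Rightarrow> ('a \<Rightarrow> nat) \<Rightarrow> ('a \<Rightarrow> nat) \<Rightarrow> nat" where
  "l1dist E x y = (\<Sum>e\<in>E. nat \<bar>int (x e) - int (y e)\<bar>)"

end

theory Submission
  imports Defs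
begin

text \<open>Let \<open>y\<close> be an optimal solution of \<open>P(t',d')\<close> closest to the given optimum \<open>x\<close> of \<open>P(t,d)\<close>.
  If \<open>t \<le> t'\<close> and \<open>d \<le> d'\<close> and some coordinate \<open>j\<close> has \<open>x\<^sub>j - y\<^sub>j > t'\<^sub>j - t\<^sub>j\<close>, the exchange property
  of the polymatroid yields \<open>i\<close> with \<open>y\<^sub>i > x\<^sub>i\<close> such that \<open>x\<close> may move a unit from \<open>j\<close> to \<open>i\<close> and \<open>y\<close>
  one from \<open>i\<close> to \<open>j\<close>; regularity turns optimality of \<open>x\<close> into the statement that the move of \<open>y\<close>
  does not increase its cost, contradicting the choice of \<open>y\<close>. Hence the part of \<open>x - y\<close> where
  \<open>x\<close> is larger is bounded by \<open>\<parallel>t - t'\<parallel>\<close>, and \<open>\<parallel>x - y\<parallel> \<le> 2\<parallel>t - t'\<parallel> + (d' - d)\<close>. The decreasing case is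
  symmetric, and the general case passes through \<open>(min t t', min d d')\<close>.\<close>

definition polymatroid_polytope :: "'a set \<Rightarrow> ('a set \<Rightarrow> nat) \<Rightarrow> ('a \<Rightarrow> nat) set" where
  "polymatroid_polytope E f = {z \<in> vecs E. \<forall>U. U \<subseteq> E \<longrightarrow> sum z U \<le> f U}"

definition tight :: "'a set \<Rightarrow> ('a set \<Rightarrow> nat) \<Rightarrow> ('a \<Rightarrow> nat) \<Rightarrow> 'a set \<Rightarrow> bool" where
  "tight E f z U \<longleftrightarrow> U \<subseteq> E \<and> sum z U = f U"

definition move_unit :: "('a \<Rightarrow> nat) \<Rightarrow> 'a \<Rightarrow> 'a \<Rightarrow> 'a \<Rightarrow> nat" where
  "move_unit z a b = z(a := z a - 1, b := z b + 1)"

lemma base_iff_polytope: "z \<in> base E f d \<longleftrightarrow> z \<in> polymatroid_polytope E f \<and> sum z E = d"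
  by (auto simp: base_def polymatroid_polytope_def)

lemma polytope_support: "z \<in> polymatroid_polytope E f \<Longrightarrow> z e \<noteq> 0 \<Longrightarrow> e \<in> E"
  by (auto simp: polymatroid_polytope_def vecs_def)

lemma polytope_sum_le: "z \<in> polymatroid_polytope E f \<Longrightarrow> U \<subseteq> E \<Longrightarrow> sum z U \<le> f U"
  unfolding polymatroid_polytope_def by blast

lemma exists_less_of_sum_le:
  fixes x y :: "'a \<Rightarrow> nat"
  assumes "finite A" "i \<in> A" "y i < x i" "sum x A \<le> sum y A"
  shows "\<exists>j\<in>A. x j < y j"
proof (rule ccontr)
  assume "\<not> ?thesis"
  then have "sum y A < sum x A"
    using assms(1-3) by (intro sum_strict_mono_ex1) (auto simp: not_less)
  with assms(4) show False by simp
qed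

lemma sum_move_unit:
  fixes z :: "'a \<Rightarrow> nat"
  assumes "finite U" "a \<noteq> b" "1 \<le> z a"
  shows "sum (move_unit z a b) U + (if a \<in> U then 1 else 0) = sum z U + (if b \<in> U then 1 else 0)"
proof -
  have "(\<Sum>e\<in>U. move_unit z a b e + (if e = a then 1 else 0))
      = (\<Sum>e\<in>U. z e + (if e = b then (1::nat) else 0))"
    using assms(2,3) by (intro sum.cong) (auto simp: move_unit_def)
  then show ?thesis using assms(1) by (simp add: sum.distrib)
qed

lemma sum_move_unit_ground:
  fixes z :: "'a \<Rightarrow> nat"
  assumes "finite E" "a \<in> E" "b \<in> E" "a \<noteq> b" "1 \<le> z a"
  shows "sum (move_unit z a b) E = sum z E"
  using sum_move_unit[of E a b z] assms by simp

lemma cost_move_unit: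
  assumes "finite E" "a \<in> E" "b \<in> E" "a \<noteq> b" "1 \<le> z a"
  shows "cost E C t (move_unit z a b)
       = cost E C t z - Cminus (C a) (z a) (t a) + Cminus (C b) (z b + 1) (t b)"
proof -
  have "cost E C t (move_unit z a b) = (\<Sum>e\<in>E. C e (z e) (t e)
          + (if e = a then C a (z a - 1) (t a) - C a (z a) (t a) else 0)
          + (if e = b then C b (z b + 1) (t b) - C b (z b) (t b) else 0))"
    unfolding cost_def using assms(4) by (intro sum.cong) (auto simp: move_unit_def)
  also have "\<dots> = cost E C t z - Cminus (C a) (z a) (t a) + Cminus (C b) (z b + 1) (t b)"
    using assms unfolding cost_def Cminus_def by (simp add: sum.distrib)
  finally show ?thesis .
qed

lemma l1dist_move_unit:
  assumes "finite E" "a \<in> E" "b \<in> E" "x a < y a" "y b < x b"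
  shows "l1dist E x (move_unit y a b) + 2 = l1dist E x y"
proof -
  have "(\<Sum>e\<in>E. nat \<bar>int (x e) - int (move_unit y a b e)\<bar> + (if e = a then 1 else 0)
          + (if e = b then 1 else 0)) = l1dist E x y"
    unfolding l1dist_def using assms(4,5) by (intro sum.cong) (auto simp: move_unit_def)
  then show ?thesis using assms unfolding l1dist_def by (simp add: sum.distrib)
qed

lemma l1dist_triangle: "l1dist E x z \<le> l1dist E x y + l1dist E y z"
  unfolding l1dist_def sum.distrib[symmetric] by (rule sum_mono) auto

lemma l1dist_commute: "l1dist E x y = l1dist E y x"
  unfolding l1dist_def by (rule sum.cong) auto

lemma l1dist_excess_split:
  "l1dist E x y = (\<Sum>e\<in>E. y e - x e) + (\<Sum>e\<in>E. x e - y e)"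
  "sum y E + (\<Sum>e\<in>E. x e - y e) = sum x E + (\<Sum>e\<in>E. y e - x e)"
proof -
  have "l1dist E x y = (\<Sum>e\<in>E. (y e - x e) + (x e - y e))"
    unfolding l1dist_def by (rule sum.cong) auto
  then show "l1dist E x y = (\<Sum>e\<in>E. y e - x e) + (\<Sum>e\<in>E. x e - y e)"
    by (simp add: sum.distrib)
  have "(\<Sum>e\<in>E. y e + (x e - y e)) = (\<Sum>e\<in>E. x e + (y e - x e))"
    by (rule sum.cong) auto
  then show "sum y E + (\<Sum>e\<in>E. x e - y e) = sum x E + (\<Sum>e\<in>E. y e - x e)"
    by (simp add: sum.distrib)
qed

lemma l1dist_min_split:
  "l1dist E t (\<lambda>e. min (t e) (t' e)) + l1dist E (\<lambda>e. min (t e) (t' e)) t' = l1dist E t t'"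
  unfolding l1dist_def sum.distrib[symmetric] by (rule sum.cong) auto

lemma l1dist_le_of_bounded_excess:
  fixes x y t t' :: "'a \<Rightarrow> nat"
  assumes "\<forall>e\<in>E. t e \<le> t' e" and "\<forall>e\<in>E. y e < x e \<longrightarrow> x e + t e \<le> y e + t' e"
    and "sum x E \<le> sum y E"
  shows "l1dist E x y \<le> 2 * l1dist E t t' + (sum y E - sum x E)"
proof -
  have "(\<Sum>e\<in>E. x e - y e) \<le> (\<Sum>e\<in>E. t' e - t e)"
    using assms(2) by (intro sum_mono) force
  also have "\<dots> = l1dist E t t'"
    unfolding l1dist_def using assms(1) by (intro sum.cong) auto
  finally show ?thesis using l1dist_excess_split[where E=E and x=x and y=y] assms(3) by linarith
qed

lemma regular_Cminus_mono_time:
  assumes "regular C" "1 \<le> a" "s \<le> s'"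
  shows "Cminus C a s \<le> Cminus C a s'"
  using assms(1,2) unfolding regular_def by (intro lift_Suc_mono_le[OF _ assms(3)]) blast

lemma regular_Cminus_time_to_load:
  "regular C \<Longrightarrow> 1 \<le> a \<Longrightarrow> Cminus C a (s + k) \<le> Cminus C (a + k) s"
proof (induction k arbitrary: a)
  case (Suc k)
  then have "Cminus C a (Suc (s + k)) \<le> Cminus C (Suc a) (s + k)"
    unfolding regular_def by blast
  also have "\<dots> \<le> Cminus C (Suc a + k) s" using Suc.IH[of "Suc a"] Suc.prems by simp
  finally show ?case by simp
qed simp

lemma regular_Cminus_mono:
  assumes "regular C" "1 \<le> a" "a \<le> a'" "a + s \<le> a' + s'"
  shows "Cminus C a s \<le> Cminus C a' s'"
proof -
  have "Cminus C a s \<le> Cminus C a (s' + (a' - a))"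
    using assms by (intro regular_Cminus_mono_time) auto
  also have "\<dots> \<le> Cminus C a' s'"
    using regular_Cminus_time_to_load[OF assms(1,2), of s' "a' - a"] assms(3) by simp
  finally show ?thesis .
qed

subsection \<open>Exchange in integral polymatroids\<close>

locale int_polymatroid =
  fixes E :: "'a set" and f :: "'a set \<Rightarrow> nat"
  assumes finite_ground: "finite E" and rank: "polymatroid_rank E f"
begin

lemma rank_empty: "f {} = 0"
  using rank unfolding polymatroid_rank_def by blast

lemma rank_submodular: "U \<subseteq> E \<Longrightarrow> V \<subseteq> E \<Longrightarrow> f (U \<union> V) + f (U \<inter> V) \<le> f U + f V"
  using rank unfolding polymatroid_rank_def by blast

lemma finite_subset_ground: "U \<subseteq> E \<Longrightarrow> finite U"
  using finite_ground finite_subset by blast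

lemma tight_Un_Int:
  assumes z: "z \<in> polymatroid_polytope E f" and "tight E f z U" "tight E f z V"
  shows "tight E f z (U \<union> V) \<and> tight E f z (U \<inter> V)"
proof -
  have UV: "U \<subseteq> E" "V \<subseteq> E" "sum z U = f U" "sum z V = f V"
    using assms(2,3) unfolding tight_def by auto
  have "sum z (U \<union> V) + sum z (U \<inter> V) = sum z U + sum z V"
    using sum.union_inter[OF finite_subset_ground finite_subset_ground] UV by blast
  moreover have "sum z (U \<union> V) \<le> f (U \<union> V)" "sum z (U \<inter> V) \<le> f (U \<inter> V)"
    using UV by (auto intro: polytope_sum_le[OF z])
  moreover have "f (U \<union> V) + f (U \<inter> V) \<le> f U + f V" using rank_submodular UV by blast
  ultimately show ?thesis using UV unfolding tight_def by auto
qed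

lemma tight_Union:
  assumes "z \<in> polymatroid_polytope E f" "finite F" "\<forall>U\<in>F. tight E f z U"
  shows "tight E f z (\<Union>F)"
  using assms(2,3)
proof (induction F rule: finite_induct)
  case empty
  then show ?case using rank_empty by (simp add: tight_def)
next
  case (insert A F)
  then show ?case using tight_Un_Int[OF assms(1), of A "\<Union>F"] by auto
qed

lemma tight_Inter:
  assumes "z \<in> polymatroid_polytope E f" "finite F" "F \<noteq> {}" "\<forall>U\<in>F. tight E f z U"
  shows "tight E f z (\<Inter>F)"
  using assms(2-4)
proof (induction F rule: finite_ne_induct)
  case (insert A F)
  then show ?case using tight_Un_Int[OF assms(1), of A "\<Inter>F"] by auto
qed simp

lemma finite_tight_family: "finite {U. tight E f z U \<and> P U}"
  by (rule finite_subset[of _ "Pow E"]) (auto simp: tight_def finite_ground)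

lemma max_tight_avoiding:
  assumes "z \<in> polymatroid_polytope E f"
  obtains M where "tight E f z M" "a \<notin> M" "\<And>U. tight E f z U \<Longrightarrow> a \<notin> U \<Longrightarrow> U \<subseteq> M"
proof -
  let ?M = "\<Union>{U. tight E f z U \<and> a \<notin> U}"
  have "tight E f z ?M" by (rule tight_Union[OF assms finite_tight_family]) simp
  moreover have "a \<notin> ?M" "\<And>U. tight E f z U \<Longrightarrow> a \<notin> U \<Longrightarrow> U \<subseteq> ?M" by blast+
  ultimately show ?thesis by (rule that)
qed

lemma min_tight_containing:
  assumes "z \<in> polymatroid_polytope E f" "tight E f z U\<^sub>0" "a \<in> U\<^sub>0"
  obtains S where "tight E f z S" "a \<in> S" "\<And>U. tight E f z U \<Longrightarrow> a \<in> U \<Longrightarrow> S \<subseteq> U"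
proof -
  let ?S = "\<Inter>{U. tight E f z U \<and> a \<in> U}"
  have "tight E f z ?S"
    by (rule tight_Inter[OF assms(1) finite_tight_family]) (use assms(2,3) in auto)
  moreover have "a \<in> ?S" "\<And>U. tight E f z U \<Longrightarrow> a \<in> U \<Longrightarrow> ?S \<subseteq> U" by blast+
  ultimately show ?thesis by (rule that)
qed

lemma move_unit_in_polytope:
  assumes z: "z \<in> polymatroid_polytope E f" and "a \<in> E" "b \<in> E" "a \<noteq> b" "1 \<le> z a"
    and no_sep: "\<And>U. tight E f z U \<Longrightarrow> b \<in> U \<Longrightarrow> a \<in> U"
  shows "move_unit z a b \<in> polymatroid_polytope E f"
  unfolding polymatroid_polytope_def
proof (intro CollectI conjI allI impI)
  show "move_unit z a b \<in> vecs E"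
    using z assms(2,3) unfolding polymatroid_polytope_def vecs_def move_unit_def by auto
next
  fix U assume U: "U \<subseteq> E"
  have eq: "sum (move_unit z a b) U + (if a \<in> U then 1 else 0)
      = sum z U + (if b \<in> U then 1 else 0)"
    using sum_move_unit[of U a b z] finite_subset_ground[OF U] assms(4,5) by blast
  have le: "sum z U \<le> f U" using polytope_sum_le[OF z U] .
  show "sum (move_unit z a b) U \<le> f U"
  proof (cases "b \<in> U \<and> a \<notin> U")
    case True
    then have "sum z U \<noteq> f U" using no_sep U unfolding tight_def by blast
    then show ?thesis using eq le True by auto
  next
    case False
    then show ?thesis using eq le by (auto split: if_splits)
  qed
qed

text \<open>\<open>S\<close> is the smallest \<open>y\<close>-tight set containing \<open>i\<close>, or \<open>E\<close> if there is none; the weight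
  comparison on \<open>S - M\<close> comes from submodularity in the first case and from \<open>x(E) \<le> y(E)\<close> in the
  second.\<close>

lemma exchange_region:
  assumes x: "x \<in> polymatroid_polytope E f" and y: "y \<in> polymatroid_polytope E f"
    and M: "tight E f x M" and "i \<in> E" and "sum x E \<le> sum y E"
  obtains S where "S \<subseteq> E" "i \<in> S" "sum x (S - M) \<le> sum y (S - M)"
    "\<And>j U. j \<in> S \<Longrightarrow> tight E f y U \<Longrightarrow> i \<in> U \<Longrightarrow> j \<in> U"
proof (cases "\<exists>U. tight E f y U \<and> i \<in> U")
  case True
  then obtain S where S: "tight E f y S" "i \<in> S"
    and S_min: "\<And>U. tight E f y U \<Longrightarrow> i \<in> U \<Longrightarrow> S \<subseteq> U"
    using min_tight_containing[OF y] by metis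
  have SE: "S \<subseteq> E" "sum y S = f S" and ME: "M \<subseteq> E" "sum x M = f M"
    using S M unfolding tight_def by auto
  have "sum x (S \<union> M) = sum x M + sum x (S - M)"
    using sum.union_disjoint[of M "S - M" x] SE ME finite_subset_ground
    by (simp add: Un_commute Un_Diff_cancel2)
  moreover have "sum y S = sum y (S \<inter> M) + sum y (S - M)"
    using sum.Int_Diff[of S y M] SE finite_subset_ground by simp
  moreover have "sum y (S \<inter> M) \<le> f (S \<inter> M)" "sum x (S \<union> M) \<le> f (S \<union> M)"
    using SE ME by (auto intro: polytope_sum_le[OF y] polytope_sum_le[OF x])
  moreover have "f (S \<union> M) + f (S \<inter> M) \<le> f S + f M" using rank_submodular SE ME by blast
  ultimately have "sum x (S - M) \<le> sum y (S - M)" using SE ME by linarith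
  then show ?thesis using that SE S S_min by blast
next
  case False
  have ME: "M \<subseteq> E" "sum x M = f M" using M unfolding tight_def by auto
  have "sum x E = sum x M + sum x (E - M)" "sum y E = sum y M + sum y (E - M)"
    using sum.subset_diff[OF ME(1) finite_ground] by (simp_all add: add.commute)
  moreover have "sum y M \<le> f M" using polytope_sum_le[OF y ME(1)] .
  ultimately have "sum x (E - M) \<le> sum y (E - M)" using ME \<open>sum x E \<le> sum y E\<close> by linarith
  then show ?thesis using that False \<open>i \<in> E\<close> by blast
qed

lemma polytope_exchange:
  assumes x: "x \<in> polymatroid_polytope E f" and y: "y \<in> polymatroid_polytope E f"
    and "y i < x i" and "sum x E \<le> sum y E"
  obtains j where "x j < y j"
    "move_unit x i j \<in> polymatroid_polytope E f" "move_unit y j i \<in> polymatroid_polytope E f"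
proof -
  have iE: "i \<in> E" using polytope_support[OF x] \<open>y i < x i\<close> by force
  obtain M where M: "tight E f x M" "i \<notin> M"
    and M_max: "\<And>U. tight E f x U \<Longrightarrow> i \<notin> U \<Longrightarrow> U \<subseteq> M"
    using max_tight_avoiding[OF x] by metis
  obtain S where S: "S \<subseteq> E" "i \<in> S" "sum x (S - M) \<le> sum y (S - M)"
    and S_in: "\<And>j U. j \<in> S \<Longrightarrow> tight E f y U \<Longrightarrow> i \<in> U \<Longrightarrow> j \<in> U"
    using exchange_region[OF x y M(1) iE assms(4)] by metis
  obtain j where j: "j \<in> S - M" "x j < y j"
    using exists_less_of_sum_le[OF _ _ \<open>y i < x i\<close> S(3)] S(1,2) M(2) finite_subset_ground
    by blast
  have jE: "j \<in> E" and ij: "i \<noteq> j" using j S(1) \<open>y i < x i\<close> by auto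
  have "move_unit x i j \<in> polymatroid_polytope E f"
  proof (rule move_unit_in_polytope[OF x iE jE ij])
    show "1 \<le> x i" using \<open>y i < x i\<close> by simp
    show "i \<in> U" if "tight E f x U" "j \<in> U" for U using M_max[OF that(1)] j(1) that(2) by blast
  qed
  moreover have "move_unit y j i \<in> polymatroid_polytope E f"
  proof (rule move_unit_in_polytope[OF y jE iE ij[symmetric]])
    show "1 \<le> y j" using j(2) by simp
    show "j \<in> U" if "tight E f y U" "i \<in> U" for U using S_in[OF _ that] j(1) by blast
  qed
  ultimately show ?thesis using that j(2) by blast
qed

lemma base_finite: "finite (base E f d)"
proof -
  have "base E f d \<subseteq> (\<lambda>g e. if e \<in> E then g e else 0) ` PiE E (\<lambda>_. {0..d})"
  proof
    fix z assume z: "z \<in> base E f d"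
    then have "z = (\<lambda>e. if e \<in> E then restrict z E e else 0)"
      unfolding base_def vecs_def by auto
    moreover have "restrict z E \<in> PiE E (\<lambda>_. {0..d})"
      using z member_le_sum[of _ E z] finite_ground unfolding base_def by auto
    ultimately show "z \<in> (\<lambda>g e. if e \<in> E then g e else 0) ` PiE E (\<lambda>_. {0..d})" by blast
  qed
  then show ?thesis using finite_ground by (auto intro: finite_subset simp: finite_PiE)
qed

lemma base_nonempty_Suc_downward:
  assumes "base E f (Suc m) \<noteq> {}" shows "base E f m \<noteq> {}"
proof -
  obtain z where z: "z \<in> polymatroid_polytope E f" "sum z E = Suc m"
    using assms base_iff_polytope by blast
  then obtain k where k: "k \<in> E" "0 < z k" by (metis gr0I sum.neutral nat.distinct(1))
  let ?z = "z(k := z k - 1)"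
  have "?z \<in> polymatroid_polytope E f"
    unfolding polymatroid_polytope_def
  proof (intro CollectI conjI allI impI)
    show "?z \<in> vecs E" using z(1) k unfolding polymatroid_polytope_def vecs_def by auto
    fix U assume "U \<subseteq> E"
    have "sum ?z U \<le> sum z U" by (rule sum_mono) simp
    also have "\<dots> \<le> f U" using polytope_sum_le[OF z(1) \<open>U \<subseteq> E\<close>] .
    finally show "sum ?z U \<le> f U" .
  qed
  moreover have "sum ?z E = m"
    using sum.remove[OF finite_ground k(1), of ?z] sum.remove[OF finite_ground k(1), of z] z(2) k(2)
    by simp
  ultimately show ?thesis using base_iff_polytope by blast
qed

lemma base_nonempty_downward: "base E f d \<noteq> {} \<Longrightarrow> m \<le> d \<Longrightarrow> base E f m \<noteq> {}"
proof (induction d)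
  case (Suc d)
  then show ?case using base_nonempty_Suc_downward by (cases "m = Suc d") auto
qed simp

end

subsection \<open>Optimal solutions close to a given one\<close>

locale regular_polymatroid_problem = int_polymatroid +
  fixes C :: "'a \<Rightarrow> nat \<Rightarrow> nat \<Rightarrow> real"
  assumes regular_costs: "\<And>e. e \<in> E \<Longrightarrow> regular (C e)"
begin

lemma optimal_exists:
  assumes "base E f d \<noteq> {}" shows "\<exists>x. optimal E f C t d x"
proof -
  let ?c = "cost E C t ` base E f d"
  have "finite ?c" using base_finite by simp
  then have "Min ?c \<in> ?c" "\<forall>y\<in>base E f d. Min ?c \<le> cost E C t y"
    using assms by auto
  then show ?thesis unfolding optimal_def by force
qed

lemma closest_optimal_exists:
  assumes "base E f d \<noteq> {}"
  obtains y where "optimal E f C t d y"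
    "\<And>y'. optimal E f C t d y' \<Longrightarrow> l1dist E x y \<le> l1dist E x y'"
  using optimal_exists[OF assms] ex_has_least_nat[of "optimal E f C t d" _ "l1dist E x"] by metis

text \<open>Optimality of \<open>x\<close> makes the marginal cost of \<open>j\<close> at \<open>x\<close> at most that of \<open>i\<close>; the inequalities
  between \<open>x\<close>, \<open>y\<close>, \<open>t\<close> and \<open>t'\<close> transport this via regularity to \<open>y\<close>, so the move of \<open>y\<close> towards
  \<open>x\<close> does not increase its cost.\<close>

lemma optimal_move_closer:
  assumes ox: "optimal E f C t d x" and oy: "optimal E f C t' d' y"
    and "x i < y i" "y j < x j"
    and ci: "x i + t i + 1 \<le> y i + t' i" and cj: "y j + t' j + 1 \<le> x j + t j"
    and px: "move_unit x j i \<in> polymatroid_polytope E f"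
    and py: "move_unit y i j \<in> polymatroid_polytope E f"
  shows "optimal E f C t' d' (move_unit y i j) \<and> l1dist E x (move_unit y i j) < l1dist E x y"
proof -
  have xb: "x \<in> base E f d" and yb: "y \<in> base E f d'"
    using ox oy unfolding optimal_def by auto
  have iE: "i \<in> E" and jE: "j \<in> E" and ij: "i \<noteq> j"
    using \<open>x i < y i\<close> \<open>y j < x j\<close> yb xb polytope_support by (force simp: base_iff_polytope)+
  have x\<^sub>2: "move_unit x j i \<in> base E f d" and y\<^sub>2: "move_unit y i j \<in> base E f d'"
    using px py xb yb sum_move_unit_ground[OF finite_ground] iE jE ij \<open>x i < y i\<close> \<open>y j < x j\<close>
    by (auto simp: base_iff_polytope)
  have "cost E C t x \<le> cost E C t (move_unit x j i)"
    using ox x\<^sub>2 unfolding optimal_def by blast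
  then have "Cminus (C j) (x j) (t j) \<le> Cminus (C i) (x i + 1) (t i)"
    using cost_move_unit[OF finite_ground jE iE ij[symmetric]] \<open>y j < x j\<close> by simp
  moreover have "Cminus (C j) (y j + 1) (t' j) \<le> Cminus (C j) (x j) (t j)"
    using \<open>y j < x j\<close> cj by (intro regular_Cminus_mono[OF regular_costs[OF jE]]) auto
  moreover have "Cminus (C i) (x i + 1) (t i) \<le> Cminus (C i) (y i) (t' i)"
    using \<open>x i < y i\<close> ci by (intro regular_Cminus_mono[OF regular_costs[OF iE]]) auto
  ultimately have "cost E C t' (move_unit y i j) \<le> cost E C t' y"
    using cost_move_unit[OF finite_ground iE jE ij] \<open>x i < y i\<close> by simp
  then have "optimal E f C t' d' (move_unit y i j)"
    using oy y\<^sub>2 unfolding optimal_def by (meson order_trans)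
  then show ?thesis
    using l1dist_move_unit[OF finite_ground iE jE \<open>x i < y i\<close> \<open>y j < x j\<close>] by simp
qed

lemma optimal_near_of_increase:
  assumes ox: "optimal E f C t d x" and t: "\<forall>e\<in>E. t e \<le> t' e" and "d \<le> d'"
    and "base E f d' \<noteq> {}"
  shows "\<exists>x'. optimal E f C t' d' x' \<and> l1dist E x x' \<le> 2 * l1dist E t t' + (d' - d)"
proof -
  obtain y where oy: "optimal E f C t' d' y"
    and y_min: "\<And>y'. optimal E f C t' d' y' \<Longrightarrow> l1dist E x y \<le> l1dist E x y'"
    using closest_optimal_exists[OF assms(4)] by metis
  have x: "x \<in> polymatroid_polytope E f" "sum x E = d"
    and y: "y \<in> polymatroid_polytope E f" "sum y E = d'"
    using ox oy unfolding optimal_def base_iff_polytope by auto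
  have "\<forall>e\<in>E. y e < x e \<longrightarrow> x e + t e \<le> y e + t' e"
  proof (rule ccontr)
    assume "\<not> ?thesis"
    then obtain j where j: "y j < x j" "y j + t' j + 1 \<le> x j + t j" by force
    obtain i where i: "x i < y i"
      "move_unit x j i \<in> polymatroid_polytope E f" "move_unit y i j \<in> polymatroid_polytope E f"
      using polytope_exchange[OF x(1) y(1) j(1)] x y \<open>d \<le> d'\<close> by auto
    have "x i + t i + 1 \<le> y i + t' i" using i(1) t polytope_support[OF y(1), of i] by force
    then show False
      using optimal_move_closer[OF ox oy i(1) j(1) _ j(2) i(2,3)] y_min by fastforce
  qed
  then show ?thesis using l1dist_le_of_bounded_excess[OF t] x y \<open>d \<le> d'\<close> oy by auto
qed

lemma optimal_near_of_decrease:
  assumes ox: "optimal E f C t d x" and t: "\<forall>e\<in>E. t' e \<le> t e" and "d' \<le> d"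
  shows "\<exists>x'. optimal E f C t' d' x' \<and> l1dist E x x' \<le> 2 * l1dist E t t' + (d - d')"
proof -
  have "base E f d' \<noteq> {}"
    using ox \<open>d' \<le> d\<close> base_nonempty_downward unfolding optimal_def by blast
  then obtain y where oy: "optimal E f C t' d' y"
    and y_min: "\<And>y'. optimal E f C t' d' y' \<Longrightarrow> l1dist E x y \<le> l1dist E x y'"
    using closest_optimal_exists by metis
  have x: "x \<in> polymatroid_polytope E f" "sum x E = d"
    and y: "y \<in> polymatroid_polytope E f" "sum y E = d'"
    using ox oy unfolding optimal_def base_iff_polytope by auto
  have "\<forall>e\<in>E. x e < y e \<longrightarrow> y e + t' e \<le> x e + t e"
  proof (rule ccontr)
    assume "\<not> ?thesis"
    then obtain i where i: "x i < y i" "x i + t i + 1 \<le> y i + t' i" by force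
    obtain j where j: "y j < x j"
      "move_unit y i j \<in> polymatroid_polytope E f" "move_unit x j i \<in> polymatroid_polytope E f"
      using polytope_exchange[OF y(1) x(1) i(1)] x y \<open>d' \<le> d\<close> by auto
    have "y j + t' j + 1 \<le> x j + t j" using j(1) t polytope_support[OF x(1), of j] by force
    then show False
      using optimal_move_closer[OF ox oy i(1) j(1) i(2) _ j(3,2)] y_min by fastforce
  qed
  then show ?thesis
    using l1dist_le_of_bounded_excess[OF t] x y \<open>d' \<le> d\<close> oy by (auto simp: l1dist_commute)
qed

end

theorem theorem3p5:
  fixes E :: "'a set" and f :: "'a set \<Rightarrow> nat" and C :: "'a \<Rightarrow> nat \<Rightarrow> nat \<Rightarrow> real"
    and D :: "nat set"
  assumes "finite E" and "E \<noteq> {}"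
    and "polymatroid_rank E f"
    and "\<And>e. e \<in> E \<Longrightarrow> regular (C e)"
    and "\<And>e x t. e \<in> E \<Longrightarrow> C e x t \<ge> 0"
    and "\<And>d. d \<in> D \<Longrightarrow> base E f d \<noteq> {}"
  shows "\<forall>t \<in> vecs E. \<forall>d \<in> D. \<forall>x. optimal E f C t d x \<longrightarrow>
           (\<forall>d' \<in> D. \<forall>t' \<in> vecs E. \<exists>x'. optimal E f C t' d' x' \<and>
              real (l1dist E x x') \<le> 2 * real (l1dist E t t') + \<bar>real d - real d'\<bar>)"
proof (intro ballI allI impI)
  interpret regular_polymatroid_problem E f C using assms(1,3,4) by unfold_locales auto
  fix t d x d' t' assume ox: "optimal E f C t d x" and "d' \<in> D"
  define s where "s = (\<lambda>e. min (t e) (t' e))"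
  obtain x\<^sub>1 where x\<^sub>1: "optimal E f C s (min d d') x\<^sub>1"
      "l1dist E x x\<^sub>1 \<le> 2 * l1dist E t s + (d - min d d')"
    using optimal_near_of_decrease[OF ox, of s "min d d'"] by (auto simp: s_def)
  obtain x' where x': "optimal E f C t' d' x'"
      "l1dist E x\<^sub>1 x' \<le> 2 * l1dist E s t' + (d' - min d d')"
    using optimal_near_of_increase[OF x\<^sub>1(1), of t' d'] assms(6)[OF \<open>d' \<in> D\<close>]
    by (auto simp: s_def)
  have "d - min d d' = d - d'" "d' - min d d' = d' - d" by auto
  then have "l1dist E x x' \<le> 2 * l1dist E t t' + ((d - d') + (d' - d))"
    using l1dist_triangle[where E=E and x=x and y=x\<^sub>1 and z=x'] l1dist_min_split[of E t t'] x\<^sub>1 x'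
    unfolding s_def by linarith
  then have "real (l1dist E x x') \<le> 2 * real (l1dist E t t') + (real (d - d') + real (d' - d))"
    by linarith
  also have "real (d - d') + real (d' - d) = \<bar>real d - real d'\<bar>"
    by (cases "d \<le> d'") (simp_all add: of_nat_diff)
  finally show "\<exists>x'. optimal E f C t' d' x' \<and>
      real (l1dist E x x') \<le> 2 * real (l1dist E t t') + \<bar>real d - real d'\<bar>"
    using x'(1) by blast
qed

end
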